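(* Consider the SEIR$^{\mathrm T}$R$^{\mathrm P}$D system with distributed delays in the context, with constant history data $S(s)=c_S>0$, $I(s)=c_I>0$ for all $s\le0$, and initial data $E(0)=\beta_0c_Ic_S\int_\theta^L\Psi(\tau)\tau\,d\tau$, $R^{\mathrm T}(0)=c_Ip\gamma\int_\epsilon^M\Phi(\rho)\rho\,d\rho$, $R^{\mathrm P}(0)=(1-p)\gamma c_I\int_\theta^L\Psi(\tau)\tau\,d\tau$. Then there exists $r>0$ such that each of the solution functions $S,E,I,R^{\mathrm T},R^{\mathrm P}$ is $r$-increasingly smooth.
   Context: The system is $S'(t)=-\beta(t)I(t)S(t)+p\gamma\int_{0}^{\infty}I(t-\rho)\Phi(\rho)\,d\rho$, $E'(t)=\beta(t)I(t)S(t)-\int_{0}^{\infty}\beta(t-\tau)I(t-\tau)S(t-\tau)\Psi(\tau)\,d\tau$, $I'(t)=\int_{0}^{\infty}\beta(t-\tau)I(t-\tau)S(t-\tau)\Psi(\tau)\,d\tau-\gamma I(t)-\mu I(t)$, $R^{\mathrm T\prime}(t)=p\gamma I(t)-p\gamma\int_{0}^{\infty}I(t-\rho)\Phi(\rho)\,d\rho$, $R^{\mathrm P\prime}(t)=(1-p)\gamma I(t)$, $D'(t)=\mu I(t)$, for $t>0$, with constants $\gamma,\mu\ge0$, $p\in[0,1]$. $\beta$ is a non-negative smooth function on $\mathbb R$ with $\beta(s)=\beta_0$ for $s\le0$. $\Psi,\Phi$ are non-negative Lebesgue integrable probability densities on $[0,\infty)$ with $\operatorname{supp}\Psi\subset[\theta,L]$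 for some $0<\theta<L<\infty$ and $\operatorname{supp}\Phi\subset[\epsilon,M]$ for some $0<\epsilon<M<\infty$. Definition: for $r>0$, a function $f$ defined on $(0,\infty)$ is $r$-increasingly smooth if $f\in C^{n+1}((rn,\infty))$ for every $n=0,1,2,\ldots$. *)

theory Defs
  imports "HOL-Analysis.Analysis"
begin

definition Ck_on :: "nat \<Rightarrow> real set \<Rightarrow> (real \<Rightarrow> real) \<Rightarrow> bool" where
  "Ck_on k U f \<longleftrightarrow>
     (\<forall>j<k. \<forall>x\<in>U. ((deriv ^^ j) f) differentiable (at x)) \<and>
     continuous_on U ((deriv ^^ k) f)"

definition smooth_real :: "(real \<Rightarrow> real) \<Rightarrow> bool" where
  "smooth_real f \<longleftrightarrow> (\<forall>k. Ck_on k UNIV f)"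

definition incr_smooth :: "real \<Rightarrow> (real \<Rightarrow> real) \<Rightarrow> bool" where
  "incr_smooth r f \<longleftrightarrow> (\<forall>n::nat. Ck_on (n + 1) {r * real n<..} f)"

definition prob_density_supp :: "(real \<Rightarrow> real) \<Rightarrow> real \<Rightarrow> real \<Rightarrow> bool" where
  "prob_density_supp F a b \<longleftrightarrow>
     (\<forall>x. 0 \<le> F x) \<and> set_integrable lborel {0..} F \<and>
     (LINT x:{0..}|lborel. F x) = 1 \<and> (\<forall>x. F x \<noteq> 0 \<longrightarrow> x \<in> {a..b})"

end

theory Submission
  imports Defs
begin

(* The equations for S and I form a closed system: their right-hand sides involve S and I only
   through pointwise products and the delay terms conv g K t = int g (t - tau) K(tau) dtau, with
   kernels K = Psi, Phi vanishing outside [theta, L] resp. [epsilon, M].  Convolution with a kernel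
   vanishing outside [c, d] preserves regularity but shifts it by the delay d: if g is C^n on (a, oo),
   then conv g K is C^n on (a + d, oo), because the difference quotients of g converge uniformly on
   compact sets, so differentiation passes under the integral sign.  Hence, with r = max L M, if S and
   I are C^n on (r (n - 1), oo), then the right-hand sides are C^n on (r n, oo) and S, I are C^(n+1)
   there.  The constant history makes S and I continuous on the whole line, which starts the
   induction.  The equations for E, R^T and R^P have right-hand sides built from the same terms.
   Neither the initial values nor the signs of the parameters are needed. *)

section \<open>Calculus of the classes \<open>Ck_on\<close>\<close>

lemma Ck_on_0: "Ck_on 0 U f \<longleftrightarrow> continuous_on U f"
  by (simp add: Ck_on_def)

lemma Ck_on_Suc:
  "Ck_on (Suc k) U f \<longleftrightarrow> (\<forall>x\<in>U. f differentiable (at x)) \<and> Ck_on k U (deriv f)"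
proof -
  have "(deriv ^^ Suc j) f = (deriv ^^ j) (deriv f)" for j
    by (simp add: funpow_Suc_right del: funpow.simps)
  moreover have "(\<forall>j<Suc k. P j) \<longleftrightarrow> P 0 \<and> (\<forall>j<k. P (Suc j))" for P
    by (auto simp: less_Suc_eq_0_disj)
  ultimately show ?thesis
    unfolding Ck_on_def by simp
qed

lemma Ck_on_subset: "Ck_on k U f \<Longrightarrow> V \<subseteq> U \<Longrightarrow> Ck_on k V f"
  unfolding Ck_on_def by (meson continuous_on_subset subsetD)

lemma Ck_on_imp_continuous_on: "Ck_on k U f \<Longrightarrow> continuous_on U f"
proof (induction k arbitrary: f)
  case 0
  then show ?case by (simp add: Ck_on_0)
next
  case (Suc k)
  then show ?case
    unfolding Ck_on_Suc
    by (meson continuous_at_imp_continuous_on differentiable_imp_continuous_within)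
qed

lemma Ck_on_SucD: "Ck_on (Suc k) U f \<Longrightarrow> Ck_on k U f"
proof (induction k arbitrary: f)
  case 0
  then show ?case by (simp add: Ck_on_0 Ck_on_imp_continuous_on)
next
  case (Suc k)
  then show ?case by (simp add: Ck_on_Suc[of "Suc k"] Ck_on_Suc[of k])
qed

lemma Ck_on_cong:
  assumes "open U" and "\<And>x. x \<in> U \<Longrightarrow> f x = g x"
  shows "Ck_on k U f \<longleftrightarrow> Ck_on k U g"
  using assms(2)
proof (induction k arbitrary: f g)
  case 0
  then show ?case by (simp add: Ck_on_0 cong: continuous_on_cong)
next
  case (Suc k)
  have near: "\<forall>\<^sub>F y in nhds x. f y = g y" if "x \<in> U" for x
    using Suc.prems assms(1) that eventually_nhds by blast
  have "f differentiable (at x) \<longleftrightarrow> g differentiable (at x)" if "x \<in> U" for x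
    using near[OF that]
    by (metis DERIV_cong_ev DERIV_deriv_iff_real_differentiable deriv_cong_ev)
  moreover have "Ck_on k U (deriv f) \<longleftrightarrow> Ck_on k U (deriv g)"
    using near Suc.IH deriv_cong_ev by blast
  ultimately show ?case
    unfolding Ck_on_Suc by auto
qed

lemma Ck_on_Suc_if_has_derivative:
  assumes "open U" and "\<And>x. x \<in> U \<Longrightarrow> (f has_real_derivative f' x) (at x)"
    and "Ck_on k U f'"
  shows "Ck_on (Suc k) U f"
proof -
  have "Ck_on k U (deriv f)"
    using Ck_on_cong[OF \<open>open U\<close>, of "deriv f" f'] assms(2,3) DERIV_imp_deriv by blast
  moreover have "\<forall>x\<in>U. f differentiable (at x)"
    using assms(2) real_differentiable_def by blast
  ultimately show ?thesis
    by (simp add: Ck_on_Suc)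
qed

lemma Ck_on_const: "open U \<Longrightarrow> Ck_on k U (\<lambda>x. c)"
proof (induction k arbitrary: c)
  case 0
  then show ?case by (simp add: Ck_on_0)
next
  case (Suc k)
  then show ?case by (intro Ck_on_Suc_if_has_derivative[where f'="\<lambda>x. 0"]) auto
qed

lemma Ck_on_add:
  "open U \<Longrightarrow> Ck_on k U f \<Longrightarrow> Ck_on k U g \<Longrightarrow> Ck_on k U (\<lambda>x. f x + g x)"
proof (induction k arbitrary: f g)
  case 0
  then show ?case by (simp add: Ck_on_0 continuous_on_add)
next
  case (Suc k)
  then show ?case
    by (intro Ck_on_Suc_if_has_derivative[where f'="\<lambda>x. deriv f x + deriv g x"] DERIV_add)
      (auto simp: Ck_on_Suc DERIV_deriv_iff_real_differentiable)
qed

lemma Ck_on_mult: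
  "open U \<Longrightarrow> Ck_on k U f \<Longrightarrow> Ck_on k U g \<Longrightarrow> Ck_on k U (\<lambda>x. f x * g x)"
proof (induction k arbitrary: f g)
  case 0
  then show ?case by (simp add: Ck_on_0 continuous_on_mult)
next
  case (Suc k)
  then have "Ck_on k U f" "Ck_on k U g" "Ck_on k U (deriv f)" "Ck_on k U (deriv g)"
    by (auto simp: Ck_on_Suc intro: Ck_on_SucD)
  then have "Ck_on k U (\<lambda>x. deriv f x * g x + deriv g x * f x)"
    using Suc.IH Suc.prems(1) by (intro Ck_on_add) auto
  with Suc.prems show ?case
    by (intro Ck_on_Suc_if_has_derivative[where f'="\<lambda>x. deriv f x * g x + deriv g x * f x"] DERIV_mult)
      (auto simp: Ck_on_Suc DERIV_deriv_iff_real_differentiable)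
qed

lemma Ck_on_cmult: "open U \<Longrightarrow> Ck_on k U f \<Longrightarrow> Ck_on k U (\<lambda>x. c * f x)"
  by (intro Ck_on_mult Ck_on_const)

lemma Ck_on_minus: "open U \<Longrightarrow> Ck_on k U f \<Longrightarrow> Ck_on k U (\<lambda>x. - f x)"
  using Ck_on_cmult[of U k f "-1"] by simp

lemma Ck_on_diff:
  "open U \<Longrightarrow> Ck_on k U f \<Longrightarrow> Ck_on k U g \<Longrightarrow> Ck_on k U (\<lambda>x. f x - g x)"
  using Ck_on_add[of U k f "\<lambda>x. - g x"] Ck_on_minus[of U k g] by simp

lemma smooth_real_imp_Ck_on: "smooth_real f \<Longrightarrow> Ck_on k U f"
  unfolding smooth_real_def using Ck_on_subset by blast

section \<open>Convolution with a delay kernel\<close>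

definition conv :: "(real \<Rightarrow> real) \<Rightarrow> (real \<Rightarrow> real) \<Rightarrow> real \<Rightarrow> real" where
  "conv g K t = (LINT \<tau>|lborel. g (t - \<tau>) * K \<tau>)"

definition delay_kernel :: "(real \<Rightarrow> real) \<Rightarrow> real \<Rightarrow> real \<Rightarrow> bool" where
  "delay_kernel K c d \<longleftrightarrow> integrable lborel K \<and> (\<forall>\<tau>. K \<tau> \<noteq> 0 \<longrightarrow> \<tau> \<in> {c..d})"

lemma delay_kernel_integrable: "delay_kernel K c d \<Longrightarrow> integrable lborel K"
  by (simp add: delay_kernel_def)

lemma delay_kernel_support: "delay_kernel K c d \<Longrightarrow> K \<tau> \<noteq> 0 \<Longrightarrow> \<tau> \<in> {c..d}"
  by (simp add: delay_kernel_def)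

lemma integrable_mult_kernel:
  fixes h K :: "real \<Rightarrow> real"
  assumes K: "delay_kernel K c d" and h: "continuous_on {c..d} h"
  shows "integrable lborel (\<lambda>\<tau>. h \<tau> * K \<tau>)"
proof -
  obtain B where B: "\<And>\<tau>. \<tau> \<in> {c..d} \<Longrightarrow> \<bar>h \<tau>\<bar> \<le> B"
    using compact_imp_bounded[OF compact_continuous_image[OF h compact_Icc]]
    unfolding bounded_iff by (metis atLeastAtMost_iff image_eqI real_norm_def)
  have eq: "(\<lambda>\<tau>. h \<tau> * K \<tau>) = (\<lambda>\<tau>. (indicator {c..d} \<tau> *\<^sub>R h \<tau>) * K \<tau>)"
    using delay_kernel_support[OF K] by (force simp: fun_eq_iff indicator_def)
  show ?thesis
    unfolding eq
  proof (rule Bochner_Integration.integrable_bound)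
    show "integrable lborel (\<lambda>\<tau>. B * K \<tau>)"
      using delay_kernel_integrable[OF K] by simp
    show "(\<lambda>\<tau>. (indicator {c..d} \<tau> *\<^sub>R h \<tau>) * K \<tau>) \<in> borel_measurable lborel"
      using borel_measurable_continuous_on_indicator[OF _ h] delay_kernel_integrable[OF K]
      by (auto intro!: borel_measurable_times)
    show "AE \<tau> in lborel. norm ((indicator {c..d} \<tau> *\<^sub>R h \<tau>) * K \<tau>) \<le> norm (B * K \<tau>)"
      using B by (force simp: indicator_def abs_mult intro!: mult_right_mono)
  qed
qed

lemma tendsto_integral_mult_kernel:
  fixes h :: "'a \<Rightarrow> real \<Rightarrow> real" and K :: "real \<Rightarrow> real"
  assumes K: "delay_kernel K c d" and lim: "uniform_limit {c..d} h h\<^sub>0 F"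
    and int: "\<forall>\<^sub>F x in F. integrable lborel (\<lambda>\<tau>. h x \<tau> * K \<tau>)"
    and int\<^sub>0: "integrable lborel (\<lambda>\<tau>. h\<^sub>0 \<tau> * K \<tau>)"
  shows "((\<lambda>x. LINT \<tau>|lborel. h x \<tau> * K \<tau>) \<longlongrightarrow> (LINT \<tau>|lborel. h\<^sub>0 \<tau> * K \<tau>)) F"
  unfolding tendsto_iff
proof (intro allI impI)
  fix e :: real
  assume "e > 0"
  define B where "B = (LINT \<tau>|lborel. \<bar>K \<tau>\<bar>)"
  define e' where "e' = e / (B + 1)"
  have "B \<ge> 0"
    by (simp add: B_def)
  then have "e' > 0"
    using \<open>e > 0\<close> by (simp add: e'_def)
  have "\<forall>\<^sub>F x in F. \<forall>\<tau>\<in>{c..d}. dist (h x \<tau>) (h\<^sub>0 \<tau>) < e'"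
    using uniform_limitD[OF lim \<open>e' > 0\<close>] .
  with int show "\<forall>\<^sub>F x in F. dist (LINT \<tau>|lborel. h x \<tau> * K \<tau>) (LINT \<tau>|lborel. h\<^sub>0 \<tau> * K \<tau>) < e"
  proof eventually_elim
    case (elim x)
    have "dist (LINT \<tau>|lborel. h x \<tau> * K \<tau>) (LINT \<tau>|lborel. h\<^sub>0 \<tau> * K \<tau>)
        = norm (LINT \<tau>|lborel. (h x \<tau> - h\<^sub>0 \<tau>) * K \<tau>)"
      using elim(1) int\<^sub>0 by (simp add: dist_norm left_diff_distrib)
    also have "\<dots> \<le> (LINT \<tau>|lborel. e' * \<bar>K \<tau>\<bar>)"
    proof (rule Bochner_Integration.integral_norm_bound_integral)
      show "integrable lborel (\<lambda>\<tau>. (h x \<tau> - h\<^sub>0 \<tau>) * K \<tau>)"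
        using elim(1) int\<^sub>0 by (simp add: left_diff_distrib)
      show "integrable lborel (\<lambda>\<tau>. e' * \<bar>K \<tau>\<bar>)"
        using delay_kernel_integrable[OF K] by simp
      show "norm ((h x \<tau> - h\<^sub>0 \<tau>) * K \<tau>) \<le> e' * \<bar>K \<tau>\<bar>" for \<tau>
        using elim(2) delay_kernel_support[OF K, of \<tau>]
        by (cases "K \<tau> = 0") (auto simp: abs_mult dist_real_def intro!: mult_right_mono less_imp_le)
    qed
    also have "\<dots> = e' * B"
      by (simp add: B_def)
    also have "\<dots> < e"
      using \<open>e > 0\<close> \<open>B \<ge> 0\<close> by (simp add: e'_def field_simps)
    finally show ?case .
  qed
qed

lemma integrable_conv_integrand:
  fixes g K :: "real \<Rightarrow> real"
  assumes K: "delay_kernel K c d"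
    and g: "continuous_on {a<..} g" and t: "a + d < t"
  shows "integrable lborel (\<lambda>\<tau>. g (t - \<tau>) * K \<tau>)"
proof (rule integrable_mult_kernel[OF K])
  show "continuous_on {c..d} (\<lambda>\<tau>. g (t - \<tau>))"
    by (rule continuous_on_compose2[OF g]) (use t in \<open>auto intro!: continuous_intros\<close>)
qed

lemma continuous_on_conv:
  fixes g K :: "real \<Rightarrow> real"
  assumes K: "delay_kernel K c d"
    and g: "continuous_on {a<..} g"
  shows "continuous_on {a + d<..} (conv g K)"
proof -
  have "isCont (conv g K) t\<^sub>0" if t\<^sub>0: "a + d < t\<^sub>0" for t\<^sub>0
  proof -
    define \<eta> where "\<eta> = (t\<^sub>0 - a - d) / 2"
    define J where "J = {t\<^sub>0 - d - \<eta>..t\<^sub>0 - c + \<eta>}"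
    have "\<eta> > 0" "J \<subseteq> {a<..}"
      using t\<^sub>0 by (auto simp: \<eta>_def J_def field_simps)
    then have uc: "uniformly_continuous_on J g"
      unfolding J_def by (intro compact_uniformly_continuous continuous_on_subset[OF g]) auto
    have shift: "uniform_limit {c..d} (\<lambda>t \<tau>. t - \<tau>) (\<lambda>\<tau>. t\<^sub>0 - \<tau>) (at t\<^sub>0)"
    proof (rule uniform_limitI)
      fix e :: real
      assume "e > 0"
      then have "\<forall>\<^sub>F t in at t\<^sub>0. dist t t\<^sub>0 < e"
        by (auto simp: eventually_at intro!: exI[of _ e])
      then show "\<forall>\<^sub>F t in at t\<^sub>0. \<forall>\<tau>\<in>{c..d}. dist (t - \<tau>) (t\<^sub>0 - \<tau>) < e"
        by eventually_elim (simp add: dist_real_def)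
    qed
    have "\<forall>\<^sub>F t in at t\<^sub>0. \<bar>t - t\<^sub>0\<bar> < \<eta>"
      using \<open>\<eta> > 0\<close> by (auto simp: eventually_at dist_real_def intro!: exI[of _ \<eta>])
    then have "\<forall>\<^sub>F t in at t\<^sub>0. (\<lambda>\<tau>. t - \<tau>) ` {c..d} \<subseteq> J"
      by eventually_elim (auto simp: J_def)
    moreover have "(\<lambda>\<tau>. t\<^sub>0 - \<tau>) ` {c..d} \<subseteq> J"
      using \<open>\<eta> > 0\<close> by (auto simp: J_def)
    ultimately have lim: "uniform_limit {c..d} (\<lambda>t \<tau>. g (t - \<tau>)) (\<lambda>\<tau>. g (t\<^sub>0 - \<tau>)) (at t\<^sub>0)"
      using uniform_limit_compose[OF shift uc] by (simp add: o_def)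
    have int: "\<forall>\<^sub>F t in at t\<^sub>0. integrable lborel (\<lambda>\<tau>. g (t - \<tau>) * K \<tau>)"
      using order_tendstoD(1)[OF tendsto_ident_at t\<^sub>0]
      by eventually_elim (rule integrable_conv_integrand[OF K g])
    show ?thesis
      unfolding isCont_def conv_def
      by (rule tendsto_integral_mult_kernel[OF K lim int integrable_conv_integrand[OF K g t\<^sub>0]])
  qed
  then show ?thesis
    by (simp add: continuous_on_eq_continuous_at)
qed

lemma real_linearization_bound:
  fixes g g' :: "real \<Rightarrow> real"
  assumes g: "\<And>z. z \<in> {min x y..max x y} \<Longrightarrow> (g has_real_derivative g' z) (at z)"
    and g': "\<And>z. z \<in> {min x y..max x y} \<Longrightarrow> \<bar>g' z - g' x\<bar> \<le> B"
  shows "\<bar>g y - g x - (y - x) * g' x\<bar> \<le> B * \<bar>y - x\<bar>"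
proof -
  have "norm ((g y - y * g' x) - (g x - x * g' x)) \<le> B * norm (y - x)"
  proof (rule field_differentiable_bound[of "{min x y..max x y}"])
    fix z
    assume z: "z \<in> {min x y..max x y}"
    have "((\<lambda>z. g z - z * g' x) has_real_derivative g' z - 1 * g' x) (at z)"
      by (intro DERIV_diff DERIV_cmult_right DERIV_ident g z)
    then show "((\<lambda>z. g z - z * g' x) has_field_derivative g' z - g' x) (at z within {min x y..max x y})"
      by (simp add: has_field_derivative_at_within)
    show "norm (g' z - g' x) \<le> B"
      using g'[OF z] by simp
  qed auto
  then show ?thesis
    by (simp add: algebra_simps)
qed

lemma uniform_limit_difference_quotient:
  fixes g g' :: "real \<Rightarrow> real"
  assumes g: "\<And>x. a < x \<Longrightarrow> (g has_real_derivative g' x) (at x)"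
    and g': "continuous_on {a<..} g'" and "a < p"
  shows "uniform_limit {p..q} (\<lambda>h x. (g (x + h) - g x) / h) g' (at 0)"
proof (rule uniform_limitI)
  fix e :: real
  assume "e > 0"
  define \<eta> where "\<eta> = (p - a) / 2"
  define J where "J = {p - \<eta>..q + \<eta>}"
  have "\<eta> > 0" "J \<subseteq> {a<..}"
    using \<open>a < p\<close> by (auto simp: \<eta>_def J_def field_simps)
  then have "uniformly_continuous_on J g'"
    unfolding J_def by (intro compact_uniformly_continuous continuous_on_subset[OF g']) auto
  then obtain \<delta> where "\<delta> > 0"
    and \<delta>: "\<And>x y. x \<in> J \<Longrightarrow> y \<in> J \<Longrightarrow> dist y x < \<delta> \<Longrightarrow> dist (g' y) (g' x) < e / 2"
    using \<open>e > 0\<close> unfolding uniformly_continuous_on_def by (metis half_gt_zero)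
  have "\<forall>\<^sub>F h in at 0. h \<noteq> 0 \<and> \<bar>h\<bar> < min \<delta> \<eta>"
    using \<open>\<delta> > 0\<close> \<open>\<eta> > 0\<close>
    by (auto simp: eventually_at dist_real_def intro!: exI[of _ "min \<delta> \<eta>"])
  then show "\<forall>\<^sub>F h in at 0. \<forall>x\<in>{p..q}. dist ((g (x + h) - g x) / h) (g' x) < e"
  proof eventually_elim
    case (elim h)
    show ?case
    proof
      fix x
      assume x: "x \<in> {p..q}"
      have "\<bar>g (x + h) - g x - (x + h - x) * g' x\<bar> \<le> e / 2 * \<bar>x + h - x\<bar>"
      proof (rule real_linearization_bound)
        fix z
        assume "z \<in> {min x (x + h)..max x (x + h)}"
        then have "z \<in> J" "\<bar>z - x\<bar> < \<delta>"
          using x elim by (auto simp: J_def)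
        then show "(g has_real_derivative g' z) (at z)" "\<bar>g' z - g' x\<bar> \<le> e / 2"
          using g \<delta>[of x z] x \<open>J \<subseteq> {a<..}\<close> \<open>\<eta> > 0\<close> by (auto simp: J_def dist_real_def)
      qed
      then have "\<bar>(g (x + h) - g x) / h - g' x\<bar> \<le> e / 2"
        using elim by (simp add: field_simps abs_divide)
      then show "dist ((g (x + h) - g x) / h) (g' x) < e"
        using \<open>e > 0\<close> by (simp add: dist_real_def)
    qed
  qed
qed

lemma has_real_derivative_conv:
  fixes g g' K :: "real \<Rightarrow> real"
  assumes K: "delay_kernel K c d"
    and g: "\<And>x. a < x \<Longrightarrow> (g has_real_derivative g' x) (at x)"
    and g': "continuous_on {a<..} g'" and t\<^sub>0: "a + d < t\<^sub>0"
  shows "(conv g K has_real_derivative conv g' K t\<^sub>0) (at t\<^sub>0)"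
proof -
  have g_cont: "continuous_on {a<..} g"
    using g by (meson DERIV_isCont continuous_at_imp_continuous_on greaterThan_iff)
  define Q where "Q = (\<lambda>h \<tau>. (g (t\<^sub>0 + h - \<tau>) - g (t\<^sub>0 - \<tau>)) / h)"
  have "uniform_limit {t\<^sub>0 - d..t\<^sub>0 - c} (\<lambda>h x. (g (x + h) - g x) / h) g' (at 0)"
    by (rule uniform_limit_difference_quotient[OF g g']) (use t\<^sub>0 in auto)
  then have "uniform_limit {c..d} (\<lambda>h \<tau>. (g (t\<^sub>0 - \<tau> + h) - g (t\<^sub>0 - \<tau>)) / h) (\<lambda>\<tau>. g' (t\<^sub>0 - \<tau>)) (at 0)"
    by (rule uniform_limit_compose') auto
  then have lim: "uniform_limit {c..d} Q (\<lambda>\<tau>. g' (t\<^sub>0 - \<tau>)) (at 0)"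
    by (simp add: Q_def diff_add_eq)
  have Q_eq: "(\<lambda>\<tau>. Q h \<tau> * K \<tau>) = (\<lambda>\<tau>. (g (t\<^sub>0 + h - \<tau>) * K \<tau> - g (t\<^sub>0 - \<tau>) * K \<tau>) / h)" for h
    by (simp add: Q_def fun_eq_iff left_diff_distrib)
  have near: "\<forall>\<^sub>F h in at 0. a + d < t\<^sub>0 + h"
    using t\<^sub>0 by (auto simp: eventually_at dist_real_def intro!: exI[of _ "t\<^sub>0 - a - d"])
  then have int: "\<forall>\<^sub>F h in at 0. integrable lborel (\<lambda>\<tau>. Q h \<tau> * K \<tau>)"
    by eventually_elim (simp add: Q_eq integrable_conv_integrand[OF K g_cont] t\<^sub>0)
  have "((\<lambda>h. LINT \<tau>|lborel. Q h \<tau> * K \<tau>) \<longlongrightarrow> conv g' K t\<^sub>0) (at 0)"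
    unfolding conv_def
    by (rule tendsto_integral_mult_kernel[OF K lim int integrable_conv_integrand[OF K g' t\<^sub>0]])
  moreover from near have "\<forall>\<^sub>F h in at 0.
      (LINT \<tau>|lborel. Q h \<tau> * K \<tau>) = (conv g K (t\<^sub>0 + h) - conv g K t\<^sub>0) / h"
    by eventually_elim
      (simp add: Q_eq conv_def integrable_conv_integrand[OF K g_cont] t\<^sub>0)
  ultimately show ?thesis
    unfolding DERIV_def by (rule Lim_transform_eventually)
qed

lemma Ck_on_conv:
  assumes K: "delay_kernel K c d"
  shows "Ck_on k {a<..} g \<Longrightarrow> Ck_on k {a + d<..} (conv g K)"
proof (induction k arbitrary: g)
  case 0
  then show ?case
    using continuous_on_conv[OF K] by (simp add: Ck_on_0)
next
  case (Suc k)
  then have g: "\<And>x. a < x \<Longrightarrow> (g has_real_derivative deriv g x) (at x)"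
    and g': "Ck_on k {a<..} (deriv g)"
    by (auto simp: Ck_on_Suc DERIV_deriv_iff_real_differentiable)
  show ?case
    using has_real_derivative_conv[OF K g Ck_on_imp_continuous_on[OF g']] Suc.IH[OF g']
    by (intro Ck_on_Suc_if_has_derivative[where f'="conv (deriv g) K"]) auto
qed

section \<open>The delay system\<close>

lemma prob_density_supp_imp_delay_kernel:
  assumes "prob_density_supp F a b" and "0 \<le> a"
  shows "delay_kernel F a b"
proof -
  have supp: "F \<tau> \<noteq> 0 \<Longrightarrow> \<tau> \<in> {a..b}" for \<tau>
    using assms(1) by (simp add: prob_density_supp_def)
  then have "(\<lambda>\<tau>. indicator {0..} \<tau> *\<^sub>R F \<tau>) = F"
    using assms(2) by (force simp: fun_eq_iff indicator_def)
  then have "integrable lborel F"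
    using assms(1) by (metis prob_density_supp_def set_integrable_def)
  with supp show ?thesis
    by (simp add: delay_kernel_def)
qed

lemma set_integral_Ici_eq_conv:
  assumes "delay_kernel K c d" and "0 \<le> c"
  shows "(LINT \<tau>:{0..}|lborel. g (t - \<tau>) * K \<tau>) = conv g K t"
proof -
  have "(\<lambda>\<tau>. indicator {0..} \<tau> *\<^sub>R (g (t - \<tau>) * K \<tau>)) = (\<lambda>\<tau>. g (t - \<tau>) * K \<tau>)"
    using delay_kernel_support[OF assms(1)] assms(2) by (force simp: fun_eq_iff indicator_def)
  then show ?thesis
    by (simp add: set_lebesgue_integral_def conv_def)
qed

lemma continuous_on_UNIV_if_constant_history:
  fixes f :: "real \<Rightarrow> real"
  assumes "continuous_on {0..} f" and "\<forall>s\<le>0. f s = c"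
  shows "continuous_on UNIV f"
proof -
  have "continuous_on {..0} f"
    by (rule continuous_on_eq[OF continuous_on_const[of _ c]]) (use assms(2) in auto)
  with assms(1) have "continuous_on ({..0} \<union> {0..}) f"
    by (intro continuous_on_closed_Un) auto
  moreover have "{..0} \<union> {0::real..} = UNIV"
    by auto
  ultimately show ?thesis
    by simp
qed

lemma incr_smooth_if_derivative:
  assumes "0 \<le> r" and f: "\<forall>t>0. (f has_real_derivative f' t) (at t)"
    and f': "\<And>n. Ck_on n {r * real n<..} f'"
  shows "incr_smooth r f"
  unfolding incr_smooth_def
proof
  fix n
  have pos: "t > 0" if "t \<in> {r * real n<..}" for t
    using that \<open>0 \<le> r\<close> by (auto intro: le_less_trans[of 0 "r * real n"])
  have "Ck_on (Suc n) {r * real n<..} f"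
    by (rule Ck_on_Suc_if_has_derivative[OF _ _ f'[of n]]) (use f pos in auto)
  then show "Ck_on (n + 1) {r * real n<..} f"
    by simp
qed

lemma Ck_on_delay_terms:
  assumes \<beta>: "smooth_real \<beta>" and \<Psi>: "delay_kernel \<Psi> \<theta> L" and \<Phi>: "delay_kernel \<Phi> \<epsilon> M"
    and r: "0 \<le> r" "L \<le> r" "M \<le> r"
    and Ck_S: "Ck_on n {a<..} S" and Ck_I: "Ck_on n {a<..} I"
  shows "Ck_on n {a + r<..} \<beta>" "Ck_on n {a + r<..} S" "Ck_on n {a + r<..} I"
    "Ck_on n {a + r<..} (conv I \<Phi>)" "Ck_on n {a + r<..} (conv (\<lambda>s. \<beta> s * I s * S s) \<Psi>)"
proof -
  have sub: "{a + r<..} \<subseteq> {a + b<..}" if "b \<le> r" for b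
    using that by auto
  show "Ck_on n {a + r<..} \<beta>"
    using \<beta> by (rule smooth_real_imp_Ck_on)
  show "Ck_on n {a + r<..} S" "Ck_on n {a + r<..} I"
    using Ck_S Ck_I sub[of 0] r(1) by (auto intro: Ck_on_subset)
  show "Ck_on n {a + r<..} (conv I \<Phi>)"
    using Ck_on_conv[OF \<Phi> Ck_I] sub[OF r(3)] by (rule Ck_on_subset)
  have "Ck_on n {a<..} (\<lambda>s. \<beta> s * I s * S s)"
    using Ck_S Ck_I smooth_real_imp_Ck_on[OF \<beta>] by (intro Ck_on_mult) auto
  then show "Ck_on n {a + r<..} (conv (\<lambda>s. \<beta> s * I s * S s) \<Psi>)"
    using Ck_on_conv[OF \<Psi>] sub[OF r(2)] by (blast intro: Ck_on_subset)
qed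

lemmas Ck_on_arith_intros = Ck_on_add Ck_on_diff Ck_on_mult Ck_on_minus Ck_on_const

lemma Ck_on_S_I:
  assumes \<beta>: "smooth_real \<beta>" and \<Psi>: "delay_kernel \<Psi> \<theta> L" and \<Phi>: "delay_kernel \<Phi> \<epsilon> M"
    and r: "0 \<le> r" "L \<le> r" "M \<le> r"
    and cont_S: "continuous_on UNIV S"
    and dS: "\<forall>t>0. (S has_real_derivative (- \<beta> t * I t * S t + p * \<gamma> * conv I \<Phi> t)) (at t)"
    and cont_I: "continuous_on UNIV I"
    and dI: "\<forall>t>0. (I has_real_derivative
               (conv (\<lambda>s. \<beta> s * I s * S s) \<Psi> t - \<gamma> * I t - \<mu> * I t)) (at t)"
  shows "Ck_on n {r * real n - r<..} S \<and> Ck_on n {r * real n - r<..} I"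
proof (induction n)
  case 0
  show ?case
    using cont_S cont_I by (auto simp: Ck_on_0 intro: continuous_on_subset)
next
  case (Suc n)
  define U where "U = {r * real n<..}"
  have "open U"
    by (simp add: U_def)
  have pos: "t > 0" if "t \<in> U" for t
    using that r(1) by (auto simp: U_def intro: le_less_trans[of 0 "r * real n"])
  note terms = Ck_on_delay_terms[OF \<beta> \<Psi> \<Phi> r Suc.IH[THEN conjunct1] Suc.IH[THEN conjunct2], simplified]
  have "Ck_on (Suc n) U S"
    by (rule Ck_on_Suc_if_has_derivative[OF \<open>open U\<close> dS[rule_format, OF pos]])
      (use terms in \<open>auto simp: U_def intro!: Ck_on_arith_intros\<close>)
  moreover have "Ck_on (Suc n) U I"
    by (rule Ck_on_Suc_if_has_derivative[OF \<open>open U\<close> dI[rule_format, OF pos]])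
      (use terms in \<open>auto simp: U_def intro!: Ck_on_arith_intros\<close>)
  ultimately show ?case
    by (simp add: U_def algebra_simps)
qed

theorem theorem4:
  fixes S E I RT RP D \<beta> \<Psi> \<Phi> :: "real \<Rightarrow> real"
    and \<beta>0 \<gamma> \<mu> p \<theta> L \<epsilon> M cS cI :: real
  assumes params: "0 \<le> \<gamma>" "0 \<le> \<mu>" "0 \<le> p" "p \<le> 1"
    and beta: "smooth_real \<beta>" "\<forall>s. 0 \<le> \<beta> s" "\<forall>s\<le>0. \<beta> s = \<beta>0"
    and Psi: "0 < \<theta>" "\<theta> < L" "prob_density_supp \<Psi> \<theta> L"
    and Phi: "0 < \<epsilon>" "\<epsilon> < M" "prob_density_supp \<Phi> \<epsilon> M"
    and hist: "0 < cS" "0 < cI" "\<forall>s\<le>0. S s = cS" "\<forall>s\<le>0. I s = cI"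
    and init: "E 0 = \<beta>0 * cI * cS * (LINT \<tau>:{\<theta>..L}|lborel. \<Psi> \<tau> * \<tau>)"
              "RT 0 = cI * p * \<gamma> * (LINT \<rho>:{\<epsilon>..M}|lborel. \<Phi> \<rho> * \<rho>)"
              "RP 0 = (1 - p) * \<gamma> * cI * (LINT \<tau>:{\<theta>..L}|lborel. \<Psi> \<tau> * \<tau>)"
    and cont: "continuous_on {0..} S" "continuous_on {0..} E" "continuous_on {0..} I"
              "continuous_on {0..} RT" "continuous_on {0..} RP" "continuous_on {0..} D"
    and eqS: "\<forall>t>0. (S has_real_derivative
               (- \<beta> t * I t * S t + p * \<gamma> * (LINT \<rho>:{0..}|lborel. I (t - \<rho>) * \<Phi> \<rho>))) (at t)"
    and eqE: "\<forall>t>0. (E has_real_derivative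
               (\<beta> t * I t * S t
                - (LINT \<tau>:{0..}|lborel. \<beta> (t - \<tau>) * I (t - \<tau>) * S (t - \<tau>) * \<Psi> \<tau>))) (at t)"
    and eqI: "\<forall>t>0. (I has_real_derivative
               ((LINT \<tau>:{0..}|lborel. \<beta> (t - \<tau>) * I (t - \<tau>) * S (t - \<tau>) * \<Psi> \<tau>)
                - \<gamma> * I t - \<mu> * I t)) (at t)"
    and eqRT: "\<forall>t>0. (RT has_real_derivative
               (p * \<gamma> * I t - p * \<gamma> * (LINT \<rho>:{0..}|lborel. I (t - \<rho>) * \<Phi> \<rho>))) (at t)"
    and eqRP: "\<forall>t>0. (RP has_real_derivative ((1 - p) * \<gamma> * I t)) (at t)"
    and eqD: "\<forall>t>0. (D has_real_derivative (\<mu> * I t)) (at t)"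
  shows "\<exists>r>0. incr_smooth r S \<and> incr_smooth r E \<and> incr_smooth r I
                \<and> incr_smooth r RT \<and> incr_smooth r RP"
proof -
  define r where "r = max L M"
  have r: "0 < r" "0 \<le> r" "L \<le> r" "M \<le> r"
    using Psi Phi by (auto simp: r_def)
  have \<Psi>: "delay_kernel \<Psi> \<theta> L" and \<Phi>: "delay_kernel \<Phi> \<epsilon> M"
    using Psi Phi by (auto intro: prob_density_supp_imp_delay_kernel)
  have CI: "(LINT \<rho>:{0..}|lborel. I (t - \<rho>) * \<Phi> \<rho>) = conv I \<Phi> t" for t
    using \<Phi> Phi(1) by (simp add: set_integral_Ici_eq_conv)
  have CB: "(LINT \<tau>:{0..}|lborel. \<beta> (t - \<tau>) * I (t - \<tau>) * S (t - \<tau>) * \<Psi> \<tau>)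
      = conv (\<lambda>s. \<beta> s * I s * S s) \<Psi> t" for t
    using set_integral_Ici_eq_conv[OF \<Psi>, of "\<lambda>s. \<beta> s * I s * S s"] Psi(1) by simp
  note eqs = eqS[unfolded CI] eqE[unfolded CB] eqI[unfolded CB] eqRT[unfolded CI] eqRP
  have SI: "Ck_on n {r * real n - r<..} S \<and> Ck_on n {r * real n - r<..} I" for n
    using continuous_on_UNIV_if_constant_history[OF cont(1) hist(3)] eqs(1)
      continuous_on_UNIV_if_constant_history[OF cont(3) hist(4)] eqs(3)
    by (rule Ck_on_S_I[OF beta(1) \<Psi> \<Phi> r(2-4)])
  note terms = Ck_on_delay_terms[OF beta(1) \<Psi> \<Phi> r(2-4) SI[THEN conjunct1] SI[THEN conjunct2],
      simplified]
  show ?thesis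
    using r(1) by (auto intro!: exI[of _ r] eqs[THEN incr_smooth_if_derivative[OF r(2)]]
        Ck_on_arith_intros simp: terms)
qed

end
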